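(* Let $\mathbb P$ be an atomless probability measure and $Y_1\le Y_2$ nonnegative random variables with $\mathbb E^{\mathbb P}(Y_1)<1<\mathbb E^{\mathbb P}(Y_2)<\infty$. Let $\overline{\mathbb Q}(A)=\sup_{\mathbb Q\in\mathcal P(\mathbb P,Y_1,Y_2)}\mathbb Q(A)$. For $A\in\mathcal F$: if $\mathbb E^{\mathbb P}(Y_2\mathds 1_A+Y_1\mathds 1_{A^c})\le1$, then $\overline{\mathbb Q}(A)=\mathbb E^{\mathbb P}(Y_2\mathds 1_A)$; if $\mathbb E^{\mathbb P}(Y_2\mathds 1_A+Y_1\mathds 1_{A^c})>1$, then $\overline{\mathbb Q}(A)=\mathbb E^{\mathbb P}(Y_2\mathds 1_B+Y_1\mathds 1_{A\setminus B})$ for any measurable $B\subseteq A$ with $\mathbb E^{\mathbb P}(Y_2\mathds 1_B+Y_1\mathds 1_{B^c})=1$ (such $B$ exist).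
   Context: $\mathcal P(\mathbb P,Y_1,Y_2)=\{\mathbb Q \text{ probability on }(\Omega,\mathcal F):\mathbb Q\ll\mathbb P,\ Y_1\le \mathrm d\mathbb Q/\mathrm d\mathbb P\le Y_2\ \mathbb P\text{-a.s.}\}$. *)

theory Defs
  imports "HOL-Probability.Probability"
begin

definition atomless :: "'a measure \<Rightarrow> bool" where
  "atomless M \<longleftrightarrow> (\<forall>A\<in>sets M. 0 < emeasure M A \<longrightarrow>
     (\<exists>B\<in>sets M. B \<subseteq> A \<and> 0 < emeasure M B \<and> emeasure M B < emeasure M A))"

definition dens_set :: "'a measure \<Rightarrow> ('a \<Rightarrow> real) \<Rightarrow> ('a \<Rightarrow> real) \<Rightarrow> 'a measure set" where
  "dens_set M Y1 Y2 = {Q. sets Q = sets M \<and> prob_space Q \<and> absolutely_continuous M Q \<and>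
     (AE x in M. ennreal (Y1 x) \<le> RN_deriv M Q x \<and> RN_deriv M Q x \<le> ennreal (Y2 x))}"

definition upper_prob :: "'a measure \<Rightarrow> ('a \<Rightarrow> real) \<Rightarrow> ('a \<Rightarrow> real) \<Rightarrow> 'a set \<Rightarrow> real" where
  "upper_prob M Y1 Y2 A = (SUP Q \<in> dens_set M Y1 Y2. measure Q A)"

end

theory Submission
  imports Defs
begin

(* Every Q in P(P,Y1,Y2) is the density measure of some Z with Y1 <= Z <= Y2 a.e. and E Z = 1,
   so Q(A) = E(Z 1_A) is bounded both by E(Y2 1_A) and by 1 - E(Y1 1_(A^c)). The smaller bound is
   attained by a density equal to Y2 on a set B and to Y1 off B: its total mass is E Y1 + nu(B),
   where nu has density Y2 - Y1. Since P is atomless, so is nu, and by Sierpinski's theorem nu takes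
   every intermediate value on subsets of a given set. Taking B with nu(B) = 1 - E Y1 and B containing A
   (if E(Y2 1_A) is the smaller bound) or B inside A (otherwise) shows that the upper probability
   of A is min (E(Y2 1_A)) (1 - E(Y1 1_(A^c))), which is the claimed value in both cases. *)

section \<open>Atomless measures\<close>

lemma atomless_ex_small_subset:
  assumes "finite_measure N" "atomless N" and C: "C \<in> sets N" "0 < measure N C" and "0 < e"
  shows "\<exists>D\<in>sets N. D \<subseteq> C \<and> 0 < measure N D \<and> measure N D < e"
proof -
  interpret finite_measure N by fact
  have halving: "\<exists>D\<in>sets N. D \<subseteq> C \<and> 0 < measure N D \<and> measure N D \<le> measure N C / 2 ^ n" for n
  proof (induction n)
    case 0
    then show ?case using C by auto
  next
    case (Suc n)
    then obtain D where D: "D \<in> sets N" "D \<subseteq> C" "0 < measure N D" "measure N D \<le> measure N C / 2 ^ n"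
      by blast
    then obtain E where E: "E \<in> sets N" "E \<subseteq> D" "0 < emeasure N E" "emeasure N E < emeasure N D"
      using \<open>atomless N\<close> unfolding atomless_def by (auto simp: emeasure_eq_measure)
    then have "0 < measure N E" "0 < measure N (D - E)"
      using D E by (auto simp: emeasure_eq_measure finite_measure_Diff ennreal_less_iff)
    moreover have "measure N E + measure N (D - E) = measure N D"
      using D E by (simp add: finite_measure_Diff)
    ultimately have "measure N E \<le> measure N C / 2 ^ Suc n \<or> measure N (D - E) \<le> measure N C / 2 ^ Suc n"
      using D(4) by auto
    then show ?case
      using D E \<open>0 < measure N E\<close> \<open>0 < measure N (D - E)\<close> by blast
  qed
  obtain n :: nat where "measure N C / e < 2 ^ n"
    using real_arch_pow[of 2] by auto
  then have "measure N C / 2 ^ n < e"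
    using \<open>0 < e\<close> by (simp add: pos_divide_less_eq mult.commute)
  moreover obtain D where "D \<in> sets N" "D \<subseteq> C" "0 < measure N D" "measure N D \<le> measure N C / 2 ^ n"
    using halving by blast
  ultimately show ?thesis by (intro bexI[of _ D]) auto
qed

lemma ex_subset_measure_half_maximal:
  assumes "0 \<le> r"
  shows "\<exists>D\<in>sets N. D \<subseteq> C \<and> measure N D \<le> r \<and>
    (\<forall>D'\<in>sets N. D' \<subseteq> C \<longrightarrow> measure N D' \<le> r \<longrightarrow> measure N D' \<le> 2 * measure N D)"
proof -
  define S where "S = {measure N D' | D'. D' \<in> sets N \<and> D' \<subseteq> C \<and> measure N D' \<le> r}"
  have "bdd_above S"
    unfolding S_def by (rule bdd_aboveI[of _ r]) auto
  then have upper: "measure N D' \<le> Sup S" if "D' \<in> sets N" "D' \<subseteq> C" "measure N D' \<le> r" for D'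
    using that by (intro cSup_upper) (auto simp: S_def)
  show ?thesis
  proof (cases "Sup S \<le> 0")
    case True
    then show ?thesis using upper \<open>0 \<le> r\<close> by (intro bexI[of _ "{}"]) force+
  next
    case False
    have "0 \<in> S"
      using \<open>0 \<le> r\<close> by (auto simp: S_def intro!: exI[of _ "{}"])
    moreover have "Sup S / 2 < Sup S"
      using False by simp
    ultimately obtain x where "x \<in> S" "Sup S / 2 < x"
      by (metis empty_iff less_cSupE)
    then obtain D where "D \<in> sets N" "D \<subseteq> C" "measure N D \<le> r" "Sup S / 2 < measure N D"
      by (auto simp: S_def)
    then show ?thesis
      using upper by (intro bexI[of _ D]) force+
  qed
qed

lemma (in finite_measure) ex_greedy_subset_seq:
  assumes "0 \<le> c"
  obtains Bs where "incseq Bs" and "\<And>n. Bs n \<in> sets M \<and> Bs n \<subseteq> A \<and> measure M (Bs n) \<le> c"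
    and "\<And>n D. D \<in> sets M \<Longrightarrow> D \<subseteq> A - Bs n \<Longrightarrow> measure M D \<le> c - measure M (Bs n) \<Longrightarrow>
      measure M D \<le> 2 * (measure M (Bs (Suc n)) - measure M (Bs n))"
proof -
  define feasible where "feasible B \<longleftrightarrow> B \<in> sets M \<and> B \<subseteq> A \<and> measure M B \<le> c" for B
  define greedy where "greedy B B' \<longleftrightarrow> B \<subseteq> B' \<and> (\<forall>D\<in>sets M. D \<subseteq> A - B \<longrightarrow>
    measure M D \<le> c - measure M B \<longrightarrow> measure M D \<le> 2 * (measure M B' - measure M B))" for B B'
  have "\<exists>Bs. \<forall>n. feasible (Bs n) \<and> greedy (Bs n) (Bs (Suc n))"
  proof (rule dependent_nat_choice[where P="\<lambda>_. feasible" and Q="\<lambda>_. greedy"])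
    show "\<exists>B. feasible B"
      using \<open>0 \<le> c\<close> unfolding feasible_def by (intro exI[of _ "{}"]) simp
  next
    fix B n assume B: "feasible B"
    then obtain D where D: "D \<in> sets M" "D \<subseteq> A - B" "measure M D \<le> c - measure M B"
      and half_max: "\<forall>D'\<in>sets M. D' \<subseteq> A - B \<longrightarrow> measure M D' \<le> c - measure M B \<longrightarrow>
        measure M D' \<le> 2 * measure M D"
      using ex_subset_measure_half_maximal[of "c - measure M B" M "A - B"] by (auto simp: feasible_def)
    have "measure M (B \<union> D) = measure M B + measure M D"
      using B D by (intro finite_measure_Union) (auto simp: feasible_def)
    then show "\<exists>B'. feasible B' \<and> greedy B B'"
      using B D half_max by (intro exI[of _ "B \<union> D"]) (auto simp: feasible_def greedy_def)
  qed
  then obtain Bs where "\<And>n. feasible (Bs n)" and "\<And>n. greedy (Bs n) (Bs (Suc n))"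
    by blast
  moreover from this have "incseq Bs"
    by (intro incseq_SucI) (simp add: greedy_def)
  ultimately show ?thesis
    by (intro that) (auto simp: feasible_def greedy_def)
qed

lemma atomless_ex_subset_measure_eq:
  assumes "finite_measure N" "atomless N" and A: "A \<in> sets N" and c: "0 \<le> c" "c \<le> measure N A"
  shows "\<exists>B\<in>sets N. B \<subseteq> A \<and> measure N B = c"
proof -
  interpret finite_measure N by fact
  obtain Bs where "incseq Bs" and Bs: "\<And>n. Bs n \<in> sets N \<and> Bs n \<subseteq> A \<and> measure N (Bs n) \<le> c"
    and greedy: "\<And>n D. D \<in> sets N \<Longrightarrow> D \<subseteq> A - Bs n \<Longrightarrow> measure N D \<le> c - measure N (Bs n) \<Longrightarrow>
      measure N D \<le> 2 * (measure N (Bs (Suc n)) - measure N (Bs n))"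
    using ex_greedy_subset_seq[OF c(1)] by blast
  define B where "B = (\<Union>n. Bs n)"
  have B: "B \<in> sets N" "B \<subseteq> A"
    using Bs by (auto simp: B_def)
  have lim: "(\<lambda>n. measure N (Bs n)) \<longlonglongrightarrow> measure N B"
    unfolding B_def using Bs \<open>incseq Bs\<close> by (intro finite_Lim_measure_incseq) auto
  have "measure N B \<le> c"
    using lim Bs by (intro LIMSEQ_le_const2) auto
  moreover have "\<not> measure N B < c"
  proof
    assume "measure N B < c"
    moreover have "measure N (A - B) = measure N A - measure N B"
      using A B by (simp add: finite_measure_Diff)
    ultimately have "0 < measure N (A - B)" "0 < c - measure N B"
      using c by auto
    then obtain D where D: "D \<in> sets N" "D \<subseteq> A - B" "0 < measure N D" "measure N D < c - measure N B"
      using atomless_ex_small_subset[OF assms(1,2) sets.Diff[OF A B(1)]] by blast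
    txt \<open>\<open>D\<close> stays admissible at every step of the greedy construction, but the increments vanish.\<close>
    have "measure N D \<le> 2 * (measure N (Bs (Suc n)) - measure N (Bs n))" for n
    proof (rule greedy)
      have "Bs n \<subseteq> B"
        by (auto simp: B_def)
      then show "D \<subseteq> A - Bs n"
        using D(2) by blast
      have "measure N (Bs n) \<le> measure N B"
        using \<open>Bs n \<subseteq> B\<close> B(1) by (rule finite_measure_mono)
      then show "measure N D \<le> c - measure N (Bs n)"
        using D(4) by linarith
    qed (rule D(1))
    moreover have "(\<lambda>n. measure N (Bs (Suc n)) - measure N (Bs n)) \<longlonglongrightarrow> 0"
      using tendsto_diff[OF LIMSEQ_Suc[OF lim] lim] by simp
    then have "(\<lambda>n. 2 * (measure N (Bs (Suc n)) - measure N (Bs n))) \<longlonglongrightarrow> 0"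
      by (rule tendsto_mult_right_zero)
    ultimately have "measure N D \<le> 0"
      by (intro LIMSEQ_le_const[of _ 0]) auto
    then show False
      using D by simp
  qed
  ultimately have "measure N B = c"
    by simp
  with B show ?thesis
    by blast
qed

lemma atomless_ex_split:
  assumes "atomless M" and C: "C \<in> sets M" "0 < emeasure M C"
  obtains B where "B \<in> sets M" "B \<subseteq> C" "0 < emeasure M B" "0 < emeasure M (C - B)"
proof -
  obtain B where B: "B \<in> sets M" "B \<subseteq> C" "0 < emeasure M B" "emeasure M B < emeasure M C"
    using assms unfolding atomless_def by blast
  have "0 < emeasure M (C - B)"
  proof (rule ccontr)
    assume "\<not> 0 < emeasure M (C - B)"
    then have "C - B \<in> null_sets M"
      using B(1) C(1) by (simp add: null_sets_def)
    then have "emeasure M (C - (C - B)) = emeasure M C"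
      using C(1) by (rule emeasure_Diff_null_set)
    moreover have "C - (C - B) = B"
      using B(2) by blast
    ultimately show False
      using B(4) by simp
  qed
  with B show ?thesis
    by (intro that) auto
qed

lemma emeasure_density_pos:
  assumes [measurable]: "f \<in> borel_measurable M" "S \<in> sets M"
    and "\<And>x. x \<in> S \<Longrightarrow> f x \<noteq> 0" and "0 < emeasure M S"
  shows "0 < emeasure (density M f) S"
proof (rule ccontr)
  assume "\<not> 0 < emeasure (density M f) S"
  then have "S \<in> null_sets (density M f)"
    by (simp add: null_sets_def)
  then have "AE x in M. x \<in> S \<longrightarrow> f x = 0"
    by (simp add: null_sets_density_iff)
  then have "AE x in M. x \<notin> S"
    by eventually_elim (use assms(3) in auto)
  then have "S \<in> null_sets M"
    by (simp add: AE_iff_null_sets)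
  with \<open>0 < emeasure M S\<close> show False
    by (simp add: null_sets_def)
qed

lemma atomless_density:
  assumes "atomless M" and f[measurable]: "f \<in> borel_measurable M"
    and finite: "emeasure (density M f) (space M) \<noteq> \<infinity>"
  shows "atomless (density M f)"
  unfolding atomless_def
proof (intro ballI impI)
  let ?N = "density M f"
  fix C assume "C \<in> sets ?N" and C_pos: "0 < emeasure ?N C"
  then have C[measurable]: "C \<in> sets M"
    by simp
  define C' where "C' = {x \<in> C. f x \<noteq> 0}"
  have C'[measurable]: "C' \<in> sets M"
    unfolding C'_def by measurable
  have "C - C' \<in> null_sets ?N"
    by (auto simp: null_sets_density_iff C'_def)
  then have C'_eq: "emeasure ?N C' = emeasure ?N C"
    using emeasure_Diff_null_set[of "C - C'" ?N C] by (simp add: C'_def Diff_Diff_Int Collect_conj_eq Int_absorb1)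
  have "0 < emeasure M C'"
  proof (rule ccontr)
    assume "\<not> 0 < emeasure M C'"
    then have "AE x in M. x \<notin> C'"
      by (intro AE_not_in) (simp add: null_sets_def)
    then have "C' \<in> null_sets ?N"
      by (auto simp: null_sets_density_iff elim: AE_mp)
    then show False
      using C'_eq C_pos by (simp add: null_setsD1)
  qed
  then obtain B where B: "B \<in> sets M" "B \<subseteq> C'" "0 < emeasure M B" "0 < emeasure M (C' - B)"
    using atomless_ex_split[OF \<open>atomless M\<close> C'] by blast
  have "0 < emeasure ?N B" "0 < emeasure ?N (C' - B)"
    using B by (auto intro!: emeasure_density_pos simp: C'_def)
  moreover have "emeasure ?N B + emeasure ?N (C' - B) = emeasure ?N C"
    using B(1,2) C'_eq by (subst plus_emeasure) (auto simp: Un_absorb1)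
  moreover have "emeasure ?N B \<noteq> \<infinity>"
    using finite emeasure_space[of ?N B] by (auto simp: top_unique)
  ultimately have "emeasure ?N B < emeasure ?N C"
    by (metis add.right_neutral ennreal_add_left_cancel_less)
  with B \<open>0 < emeasure ?N B\<close> show "\<exists>B\<in>sets ?N. B \<subseteq> C \<and> 0 < emeasure ?N B \<and> emeasure ?N B < emeasure ?N C"
    by (intro bexI[of _ B]) (auto simp: C'_def)
qed

section \<open>Densities in a band\<close>

(* Nonnegativity is required on all of space M since density M Z silently truncates Z via ennreal. *)
definition admissible_density :: "'a measure \<Rightarrow> ('a \<Rightarrow> real) \<Rightarrow> ('a \<Rightarrow> real) \<Rightarrow> ('a \<Rightarrow> real) \<Rightarrow> bool" where
  "admissible_density M Y1 Y2 Z \<longleftrightarrow> Z \<in> borel_measurable M \<and> (\<forall>x\<in>space M. 0 \<le> Z x) \<and>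
     (AE x in M. Y1 x \<le> Z x \<and> Z x \<le> Y2 x) \<and> integrable M Z \<and> integral\<^sup>L M Z = 1"

lemma measure_density_eq_integral:
  fixes Z :: "'a \<Rightarrow> real"
  assumes [measurable]: "Z \<in> borel_measurable M" "S \<in> sets M" and "\<And>x. x \<in> space M \<Longrightarrow> 0 \<le> Z x"
  shows "measure (density M Z) S = integral\<^sup>L M (\<lambda>x. Z x * indicator S x)"
proof -
  have "emeasure (density M Z) S = (\<integral>\<^sup>+ x. ennreal (Z x) * indicator S x \<partial>M)"
    by (simp add: emeasure_density)
  also have "\<dots> = (\<integral>\<^sup>+ x. ennreal (Z x * indicator S x) \<partial>M)"
    by (intro nn_integral_cong) (simp add: indicator_def)
  finally have "measure (density M Z) S = enn2real (\<integral>\<^sup>+ x. ennreal (Z x * indicator S x) \<partial>M)"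
    by (simp add: measure_def)
  also have "\<dots> = integral\<^sup>L M (\<lambda>x. Z x * indicator S x)"
    using assms by (intro integral_eq_nn_integral[symmetric]) (auto simp: indicator_def)
  finally show ?thesis .
qed

lemma density_in_dens_set:
  assumes "sigma_finite_measure M" and "admissible_density M Y1 Y2 Z"
  shows "density M Z \<in> dens_set M Y1 Y2"
proof -
  interpret sigma_finite_measure M by fact
  have [measurable]: "Z \<in> borel_measurable M" and nonneg: "\<forall>x\<in>space M. 0 \<le> Z x"
    and bounds: "AE x in M. Y1 x \<le> Z x \<and> Z x \<le> Y2 x"
    and "integrable M Z" "integral\<^sup>L M Z = 1"
    using assms(2) by (auto simp: admissible_density_def)
  have "emeasure (density M Z) (space M) = (\<integral>\<^sup>+ x. ennreal (Z x) \<partial>M)"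
    by (simp add: emeasure_density cong: nn_integral_cong)
  also have "\<dots> = 1"
    using \<open>integrable M Z\<close> \<open>integral\<^sup>L M Z = 1\<close> nonneg by (subst nn_integral_eq_integral) auto
  finally have "prob_space (density M Z)"
    by (intro prob_spaceI) simp
  moreover have "AE x in M. ennreal (Z x) = RN_deriv M (density M Z) x"
    by (rule RN_deriv_unique) auto
  with bounds have "AE x in M. ennreal (Y1 x) \<le> RN_deriv M (density M Z) x \<and> RN_deriv M (density M Z) x \<le> ennreal (Y2 x)"
    by eventually_elim (metis ennreal_leI)
  ultimately show ?thesis
    by (simp add: dens_set_def absolutely_continuousI_density)
qed

lemma dens_set_imp_density:
  assumes "sigma_finite_measure M" and Y2: "\<And>x. x \<in> space M \<Longrightarrow> 0 \<le> Y2 x"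
    and "Q \<in> dens_set M Y1 Y2"
  shows "\<exists>Z. admissible_density M Y1 Y2 Z \<and> Q = density M Z"
proof -
  interpret sigma_finite_measure M by fact
  have Q: "sets Q = sets M" "prob_space Q" "absolutely_continuous M Q"
    and RN_bounds: "AE x in M. ennreal (Y1 x) \<le> RN_deriv M Q x \<and> RN_deriv M Q x \<le> ennreal (Y2 x)"
    using assms(3) by (auto simp: dens_set_def)
  define Z where "Z x = enn2real (RN_deriv M Q x)" for x
  have Z_measurable[measurable]: "Z \<in> borel_measurable M"
    unfolding Z_def by measurable
  have nonneg: "\<forall>x\<in>space M. 0 \<le> Z x"
    by (simp add: Z_def)
  have RN_Z: "AE x in M. RN_deriv M Q x = ennreal (Z x) \<and> Y1 x \<le> Z x \<and> Z x \<le> Y2 x"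
    using RN_bounds AE_space
  proof eventually_elim
    case (elim x)
    then have "RN_deriv M Q x < \<top>"
      by (meson ennreal_less_top order.strict_trans1)
    then have RN_eq: "RN_deriv M Q x = ennreal (Z x)"
      by (simp add: Z_def)
    have "ennreal (Y1 x) \<le> ennreal (Z x)" "ennreal (Z x) \<le> ennreal (Y2 x)"
      using elim by (simp_all add: RN_eq)
    then show ?case
      using RN_eq Y2[OF elim(2)] nonneg elim(2) by (simp add: ennreal_le_iff)
  qed
  have "AE x in M. RN_deriv M Q x = ennreal (Z x)"
    using RN_Z by eventually_elim simp
  then have "density M (RN_deriv M Q) = density M Z"
    by (intro density_cong) auto
  then have "Q = density M Z"
    using density_RN_deriv[OF Q(3,1)] by simp
  have nn: "(\<integral>\<^sup>+ x. ennreal (Z x) \<partial>M) = 1"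
    using prob_space.emeasure_space_1[OF Q(2)] \<open>Q = density M Z\<close> by (simp add: emeasure_density cong: nn_integral_cong)
  have "integrable M Z"
    using nn nonneg by (intro integrableI_nonneg) (auto intro: AE_I2)
  moreover have "integral\<^sup>L M Z = 1"
    using nn nonneg \<open>integrable M Z\<close> by (subst integral_eq_nn_integral) auto
  moreover have "AE x in M. Y1 x \<le> Z x \<and> Z x \<le> Y2 x"
    using RN_Z by eventually_elim simp
  ultimately show ?thesis
    using \<open>Q = density M Z\<close> nonneg by (auto simp: admissible_density_def)
qed

lemma dens_set_eq_image_density:
  assumes "sigma_finite_measure M" and "\<And>x. x \<in> space M \<Longrightarrow> 0 \<le> Y2 x"
  shows "dens_set M Y1 Y2 = (\<lambda>Z. density M Z) ` Collect (admissible_density M Y1 Y2)"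
proof
  show "dens_set M Y1 Y2 \<subseteq> (\<lambda>Z. density M Z) ` Collect (admissible_density M Y1 Y2)"
    using dens_set_imp_density[of M Y2 _ Y1] assms by blast
  show "(\<lambda>Z. density M Z) ` Collect (admissible_density M Y1 Y2) \<subseteq> dens_set M Y1 Y2"
    using density_in_dens_set[of M Y1 Y2] assms(1) by blast
qed

lemma upper_prob_eq_SUP_admissible:
  assumes "sigma_finite_measure M" and "\<And>x. x \<in> space M \<Longrightarrow> 0 \<le> Y2 x" and "A \<in> sets M"
  shows "upper_prob M Y1 Y2 A =
    (SUP Z \<in> Collect (admissible_density M Y1 Y2). integral\<^sup>L M (\<lambda>x. Z x * indicator A x))"
proof -
  have dens_set_eq: "dens_set M Y1 Y2 = (\<lambda>Z. density M Z) ` Collect (admissible_density M Y1 Y2)"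
    using assms(1,2) by (rule dens_set_eq_image_density)
  show ?thesis
    unfolding upper_prob_def dens_set_eq image_image using assms(3)
    by (intro SUP_cong refl measure_density_eq_integral) (auto simp: admissible_density_def)
qed

lemma upper_prob_eqI:
  assumes "sigma_finite_measure M" and "\<And>x. x \<in> space M \<Longrightarrow> 0 \<le> Y2 x" and "A \<in> sets M"
    and "admissible_density M Y1 Y2 Z\<^sub>0" and "integral\<^sup>L M (\<lambda>x. Z\<^sub>0 x * indicator A x) = v"
    and "\<And>Z. admissible_density M Y1 Y2 Z \<Longrightarrow> integral\<^sup>L M (\<lambda>x. Z x * indicator A x) \<le> v"
  shows "upper_prob M Y1 Y2 A = v"
proof -
  have "upper_prob M Y1 Y2 A =
      (SUP Z \<in> Collect (admissible_density M Y1 Y2). integral\<^sup>L M (\<lambda>x. Z x * indicator A x))"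
    using assms(1-3) by (rule upper_prob_eq_SUP_admissible)
  also have "\<dots> = v"
    using assms(4-) by (intro cSup_eq_maximum) auto
  finally show ?thesis .
qed

section \<open>The upper probability of an event\<close>

lemma integral_indicator_add_compl:
  fixes f :: "'a \<Rightarrow> real"
  assumes "integrable M f" and "A \<in> sets M"
  shows "integral\<^sup>L M (\<lambda>x. f x * indicator A x) + integral\<^sup>L M (\<lambda>x. f x * indicator (space M - A) x) =
    integral\<^sup>L M f"
proof -
  have "integral\<^sup>L M (\<lambda>x. f x * indicator A x) + integral\<^sup>L M (\<lambda>x. f x * indicator (space M - A) x) =
      integral\<^sup>L M (\<lambda>x. f x * indicator A x + f x * indicator (space M - A) x)"
    using assms by (intro Bochner_Integration.integral_add[symmetric] integrable_real_mult_indicator) auto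
  also have "\<dots> = integral\<^sup>L M f"
    by (intro Bochner_Integration.integral_cong) (auto simp: indicator_def)
  finally show ?thesis .
qed

locale density_band = prob_space M for M :: "'a measure" and Y1 Y2 :: "'a \<Rightarrow> real" +
  assumes Y1_measurable[measurable]: "Y1 \<in> borel_measurable M"
    and Y2_measurable[measurable]: "Y2 \<in> borel_measurable M"
    and Y1_nonneg: "\<And>x. x \<in> space M \<Longrightarrow> 0 \<le> Y1 x"
    and Y1_le_Y2: "\<And>x. x \<in> space M \<Longrightarrow> Y1 x \<le> Y2 x"
    and integrable_Y2: "integrable M Y2"
begin

lemma Y2_nonneg: "x \<in> space M \<Longrightarrow> 0 \<le> Y2 x"
  using Y1_nonneg Y1_le_Y2 by (rule order.trans)

lemma integrable_Y1: "integrable M Y1"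
  using integrable_Y2 Y1_measurable
  by (rule Bochner_Integration.integrable_bound) (auto simp: Y1_nonneg Y2_nonneg Y1_le_Y2 intro!: AE_I2)

definition gap_measure :: "'a measure" where
  "gap_measure = density M (\<lambda>x. Y2 x - Y1 x)"

lemma sets_gap_measure[simp]: "sets gap_measure = sets M"
  by (simp add: gap_measure_def)

lemma measure_gap_measure:
  "S \<in> sets M \<Longrightarrow> measure gap_measure S = integral\<^sup>L M (\<lambda>x. (Y2 x - Y1 x) * indicator S x)"
  unfolding gap_measure_def by (rule measure_density_eq_integral) (auto simp: Y1_le_Y2)

lemma finite_measure_gap_measure: "finite_measure gap_measure"
proof (rule finite_measureI)
  have "emeasure gap_measure (space gap_measure) = (\<integral>\<^sup>+ x. ennreal (Y2 x - Y1 x) \<partial>M)"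
    by (simp add: gap_measure_def emeasure_density cong: nn_integral_cong)
  also have "\<dots> = ennreal (integral\<^sup>L M (\<lambda>x. Y2 x - Y1 x))"
    using integrable_Y1 integrable_Y2 Y1_le_Y2 by (intro nn_integral_eq_integral) (auto intro: AE_I2)
  finally show "emeasure gap_measure (space gap_measure) \<noteq> \<infinity>"
    by simp
qed

lemma atomless_gap_measure: "atomless M \<Longrightarrow> atomless gap_measure"
  using finite_measure.emeasure_finite[OF finite_measure_gap_measure, of "space M"]
  unfolding gap_measure_def by (intro atomless_density) auto

definition extreme_density :: "'a set \<Rightarrow> 'a \<Rightarrow> real" where
  "extreme_density B x = Y2 x * indicator B x + Y1 x * indicator (space M - B) x"

lemma integrable_extreme_density: "B \<in> sets M \<Longrightarrow> integrable M (extreme_density B)"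
  unfolding extreme_density_def using integrable_Y1 integrable_Y2
  by (intro Bochner_Integration.integrable_add integrable_real_mult_indicator) auto

lemma integral_extreme_density:
  "B \<in> sets M \<Longrightarrow> integral\<^sup>L M (extreme_density B) =
    integral\<^sup>L M (\<lambda>x. Y2 x * indicator B x) + integral\<^sup>L M (\<lambda>x. Y1 x * indicator (space M - B) x)"
  unfolding extreme_density_def using integrable_Y1 integrable_Y2
  by (intro Bochner_Integration.integral_add integrable_real_mult_indicator) auto

lemma integral_extreme_density_eq_gap_measure:
  assumes "B \<in> sets M"
  shows "integral\<^sup>L M (extreme_density B) = integral\<^sup>L M Y1 + measure gap_measure B"
proof -
  have "integral\<^sup>L M (extreme_density B) = integral\<^sup>L M (\<lambda>x. Y1 x + (Y2 x - Y1 x) * indicator B x)"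
    by (intro Bochner_Integration.integral_cong) (auto simp: extreme_density_def indicator_def)
  also have "\<dots> = integral\<^sup>L M Y1 + integral\<^sup>L M (\<lambda>x. (Y2 x - Y1 x) * indicator B x)"
    using assms integrable_Y1 integrable_Y2
    by (intro Bochner_Integration.integral_add integrable_real_mult_indicator) auto
  finally show ?thesis
    using assms by (simp add: measure_gap_measure)
qed

lemma admissible_extreme_density:
  assumes "B \<in> sets M" and "integral\<^sup>L M (extreme_density B) = 1"
  shows "admissible_density M Y1 Y2 (extreme_density B)"
  unfolding admissible_density_def using assms integrable_extreme_density
  by (auto simp: extreme_density_def indicator_def Y1_nonneg Y2_nonneg Y1_le_Y2 intro!: AE_I2)

lemma integral_admissible_indicator_le_Y2:
  assumes "admissible_density M Y1 Y2 Z" and "A \<in> sets M"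
  shows "integral\<^sup>L M (\<lambda>x. Z x * indicator A x) \<le> integral\<^sup>L M (\<lambda>x. Y2 x * indicator A x)"
  using assms integrable_Y2
  by (intro integral_mono_AE integrable_real_mult_indicator)
     (auto simp: admissible_density_def indicator_def elim: AE_mp)

lemma integral_admissible_indicator_le_compl:
  assumes Z: "admissible_density M Y1 Y2 Z" and "A \<in> sets M"
  shows "integral\<^sup>L M (\<lambda>x. Z x * indicator A x) \<le> 1 - integral\<^sup>L M (\<lambda>x. Y1 x * indicator (space M - A) x)"
proof -
  have "integral\<^sup>L M (\<lambda>x. Y1 x * indicator (space M - A) x) \<le> integral\<^sup>L M (\<lambda>x. Z x * indicator (space M - A) x)"
    using assms integrable_Y1
    by (intro integral_mono_AE integrable_real_mult_indicator)
       (auto simp: admissible_density_def indicator_def elim: AE_mp)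
  moreover have "integral\<^sup>L M (\<lambda>x. Z x * indicator A x) + integral\<^sup>L M (\<lambda>x. Z x * indicator (space M - A) x) = 1"
    using assms integral_indicator_add_compl[of M Z A] by (simp add: admissible_density_def)
  ultimately show ?thesis
    by linarith
qed

lemma integral_extreme_density_indicator_superset:
  assumes "A \<subseteq> B"
  shows "integral\<^sup>L M (\<lambda>x. extreme_density B x * indicator A x) = integral\<^sup>L M (\<lambda>x. Y2 x * indicator A x)"
  using assms by (intro Bochner_Integration.integral_cong) (auto simp: extreme_density_def indicator_def)

lemma integral_extreme_density_indicator_subset:
  assumes "A \<in> sets M" "B \<in> sets M" "B \<subseteq> A" and "integral\<^sup>L M (extreme_density B) = 1"
  shows "integral\<^sup>L M (\<lambda>x. extreme_density B x * indicator A x) =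
    1 - integral\<^sup>L M (\<lambda>x. Y1 x * indicator (space M - A) x)"
proof -
  have "integral\<^sup>L M (\<lambda>x. extreme_density B x * indicator (space M - A) x) =
      integral\<^sup>L M (\<lambda>x. Y1 x * indicator (space M - A) x)"
    using assms(3) by (intro Bochner_Integration.integral_cong) (auto simp: extreme_density_def indicator_def)
  then show ?thesis
    using integral_indicator_add_compl[OF integrable_extreme_density[OF assms(2)] assms(1)] assms(4)
    by linarith
qed

lemma ex_extreme_density_superset:
  assumes "atomless M" and A: "A \<in> sets M"
    and "integral\<^sup>L M (extreme_density A) \<le> 1" and "1 \<le> integral\<^sup>L M Y2"
  shows "\<exists>B\<in>sets M. A \<subseteq> B \<and> integral\<^sup>L M (extreme_density B) = 1"
proof -
  interpret gap: finite_measure gap_measure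
    by (rule finite_measure_gap_measure)
  have "integral\<^sup>L M (extreme_density (space M)) = integral\<^sup>L M Y2"
    by (intro Bochner_Integration.integral_cong) (auto simp: extreme_density_def)
  then have "integral\<^sup>L M Y1 + measure gap_measure (space M) = integral\<^sup>L M Y2"
    by (simp add: integral_extreme_density_eq_gap_measure)
  moreover have "measure gap_measure (space M - A) = measure gap_measure (space M) - measure gap_measure A"
    using A sets.sets_into_space[OF A] by (intro gap.finite_measure_Diff) auto
  ultimately obtain C where C: "C \<in> sets M" "C \<subseteq> space M - A"
    and "measure gap_measure C = 1 - integral\<^sup>L M Y1 - measure gap_measure A"
    using atomless_ex_subset_measure_eq[OF finite_measure_gap_measure atomless_gap_measure[OF \<open>atomless M\<close>],
        of "space M - A" "1 - integral\<^sup>L M Y1 - measure gap_measure A"]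
      assms(3,4) A by (auto simp: integral_extreme_density_eq_gap_measure)
  moreover have "measure gap_measure (A \<union> C) = measure gap_measure A + measure gap_measure C"
    using A C by (intro gap.finite_measure_Union) auto
  ultimately show ?thesis
    using A by (intro bexI[of _ "A \<union> C"]) (auto simp: integral_extreme_density_eq_gap_measure)
qed

lemma ex_extreme_density_subset:
  assumes "atomless M" and A: "A \<in> sets M"
    and "integral\<^sup>L M Y1 \<le> 1" and "1 \<le> integral\<^sup>L M (extreme_density A)"
  shows "\<exists>B\<in>sets M. B \<subseteq> A \<and> integral\<^sup>L M (extreme_density B) = 1"
proof -
  obtain B where "B \<in> sets M" "B \<subseteq> A" "measure gap_measure B = 1 - integral\<^sup>L M Y1"
    using atomless_ex_subset_measure_eq[OF finite_measure_gap_measure atomless_gap_measure[OF \<open>atomless M\<close>],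
        of A "1 - integral\<^sup>L M Y1"]
      assms(3,4) A by (auto simp: integral_extreme_density_eq_gap_measure)
  then show ?thesis
    by (intro bexI[of _ B]) (auto simp: integral_extreme_density_eq_gap_measure)
qed

theorem upper_prob_eq_min:
  assumes "atomless M" and A: "A \<in> sets M"
    and "integral\<^sup>L M Y1 \<le> 1" and "1 \<le> integral\<^sup>L M Y2"
  shows "upper_prob M Y1 Y2 A =
    min (integral\<^sup>L M (\<lambda>x. Y2 x * indicator A x)) (1 - integral\<^sup>L M (\<lambda>x. Y1 x * indicator (space M - A) x))"
proof (cases "integral\<^sup>L M (extreme_density A) \<le> 1")
  case True
  then obtain B where B: "B \<in> sets M" "A \<subseteq> B" "integral\<^sup>L M (extreme_density B) = 1"
    using ex_extreme_density_superset assms by blast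
  have "upper_prob M Y1 Y2 A = integral\<^sup>L M (\<lambda>x. Y2 x * indicator A x)"
    using prob_space_imp_sigma_finite[OF prob_space_axioms] Y2_nonneg A
      admissible_extreme_density[OF B(1,3)] integral_extreme_density_indicator_superset[OF B(2)]
  proof (rule upper_prob_eqI)
    show "integral\<^sup>L M (\<lambda>x. Z x * indicator A x) \<le> integral\<^sup>L M (\<lambda>x. Y2 x * indicator A x)"
      if "admissible_density M Y1 Y2 Z" for Z
      using that A by (rule integral_admissible_indicator_le_Y2)
  qed
  with True A show ?thesis
    by (simp add: integral_extreme_density)
next
  case False
  then obtain B where B: "B \<in> sets M" "B \<subseteq> A" "integral\<^sup>L M (extreme_density B) = 1"
    using ex_extreme_density_subset assms by force
  have "upper_prob M Y1 Y2 A = 1 - integral\<^sup>L M (\<lambda>x. Y1 x * indicator (space M - A) x)"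
    using prob_space_imp_sigma_finite[OF prob_space_axioms] Y2_nonneg A
      admissible_extreme_density[OF B(1,3)] integral_extreme_density_indicator_subset[OF A B]
  proof (rule upper_prob_eqI)
    show "integral\<^sup>L M (\<lambda>x. Z x * indicator A x) \<le> 1 - integral\<^sup>L M (\<lambda>x. Y1 x * indicator (space M - A) x)"
      if "admissible_density M Y1 Y2 Z" for Z
      using that A by (rule integral_admissible_indicator_le_compl)
  qed
  with False A show ?thesis
    by (simp add: integral_extreme_density)
qed

end

theorem mainTheorem8:
  fixes M :: "'a measure" and Y1 Y2 :: "'a \<Rightarrow> real" and A :: "'a set"
  assumes "prob_space M"
    and "atomless M"
    and "Y1 \<in> borel_measurable M" and "Y2 \<in> borel_measurable M"
    and "\<And>x. x \<in> space M \<Longrightarrow> 0 \<le> Y1 x"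
    and "\<And>x. x \<in> space M \<Longrightarrow> Y1 x \<le> Y2 x"
    and "integrable M Y2"
    and "integral\<^sup>L M Y1 < 1" and "1 < integral\<^sup>L M Y2"
    and "A \<in> sets M"
  shows "(integral\<^sup>L M (\<lambda>x. Y2 x * indicator A x + Y1 x * indicator (space M - A) x) \<le> 1 \<longrightarrow>
            upper_prob M Y1 Y2 A = integral\<^sup>L M (\<lambda>x. Y2 x * indicator A x))
       \<and> (integral\<^sup>L M (\<lambda>x. Y2 x * indicator A x + Y1 x * indicator (space M - A) x) > 1 \<longrightarrow>
            (\<exists>B\<in>sets M. B \<subseteq> A \<and>
               integral\<^sup>L M (\<lambda>x. Y2 x * indicator B x + Y1 x * indicator (space M - B) x) = 1)
          \<and> (\<forall>B\<in>sets M. B \<subseteq> A \<longrightarrow>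
               integral\<^sup>L M (\<lambda>x. Y2 x * indicator B x + Y1 x * indicator (space M - B) x) = 1 \<longrightarrow>
               upper_prob M Y1 Y2 A = integral\<^sup>L M (\<lambda>x. Y2 x * indicator B x + Y1 x * indicator (A - B) x)))"
proof -
  interpret density_band M Y1 Y2
    using assms(1,3-7) by (simp add: density_band_def density_band_axioms_def)
  have extreme: "(\<lambda>x. Y2 x * indicator S x + Y1 x * indicator (space M - S) x) = extreme_density S" for S
    by (simp add: extreme_density_def fun_eq_iff)
  have upper: "upper_prob M Y1 Y2 A = min (integral\<^sup>L M (\<lambda>x. Y2 x * indicator A x))
      (1 - integral\<^sup>L M (\<lambda>x. Y1 x * indicator (space M - A) x))"
    using assms(2,8-10) by (intro upper_prob_eq_min) auto
  show ?thesis
    unfolding extreme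
  proof (intro conjI impI ballI)
    assume "integral\<^sup>L M (extreme_density A) \<le> 1"
    then show "upper_prob M Y1 Y2 A = integral\<^sup>L M (\<lambda>x. Y2 x * indicator A x)"
      using upper integral_extreme_density[OF assms(10)] by simp
  next
    assume "1 < integral\<^sup>L M (extreme_density A)"
    then show "\<exists>B\<in>sets M. B \<subseteq> A \<and> integral\<^sup>L M (extreme_density B) = 1"
      using ex_extreme_density_subset assms(2,8,10) by simp
  next
    fix B assume A_gt_1: "1 < integral\<^sup>L M (extreme_density A)"
      and B: "B \<in> sets M" "B \<subseteq> A" "integral\<^sup>L M (extreme_density B) = 1"
    have "integral\<^sup>L M (\<lambda>x. Y2 x * indicator B x + Y1 x * indicator (A - B) x) =
        integral\<^sup>L M (\<lambda>x. extreme_density B x * indicator A x)"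
      using B(2) by (intro Bochner_Integration.integral_cong) (auto simp: extreme_density_def indicator_def)
    also have "\<dots> = upper_prob M Y1 Y2 A"
      using integral_extreme_density_indicator_subset[OF assms(10) B] upper A_gt_1
        integral_extreme_density[OF assms(10)] by simp
    finally show "upper_prob M Y1 Y2 A = integral\<^sup>L M (\<lambda>x. Y2 x * indicator B x + Y1 x * indicator (A - B) x)"
      by simp
  qed
qed

end
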